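(* Let $n\geqslant 3$, let $\lambda\in\mathcal{D}_n$ have length $\ell\geqslant 3$, set $r=2\lfloor(\ell+1)/2\rfloor$ and $\lambda_j=0$ for $j>\ell$. Then $$\sum_{j=1}^{r-1}(-1)^{j-1}\,\partial_{\Box}\bigl(\widetilde{P}_{\lambda_j,\lambda_r}(X)\bigr)\cdot\partial_{\Box}\bigl(\widetilde{P}_{\lambda\smallsetminus\{\lambda_j,\lambda_r\}}(X)\bigr)=0$$ in $A[X]$, where $A=\mathbb{Z}[\tfrac12]$.
   Context: $X=(x_1,\ldots,x_n)$. $\mathcal{D}_n$ is the set of strict partitions with all parts $\leqslant n$. $\widetilde{P}$-polynomials: $\widetilde{P}_0(X)=1$, $\widetilde{P}_i(X)=e_i(X)/2$ for $i>0$ ($e_i$ elementary symmetric); for $i\geqslant j\geqslant 0$, $\widetilde{P}_{i,j}(X)=\widetilde{P}_i\widetilde{P}_j+2\sum_{k=1}^{j-1}(-1)^k\widetilde{P}_{i+k}\widetilde{P}_{j-k}+(-1)^j\widetilde{P}_{i+j}$ (so $\widetilde P_{i,0}=\widetilde P_i$); for a partition $\mu$ of length $m$, $\widetilde{P}_\mu(X)=\mathrm{Pfaffian}[\widetilde{P}_{\mu_i,\mu_j}(X)]_{1\leqslant i<j\leqslant 2\lfloor(m+1)/2\rfloor}$. For strict partitions, $\lambda\smallsetminus\mu$ is the partition whose parts are the parts of $\lambda$ that are not parts of $\mu$. The operator $\partial_\Box$ on $A[X]$ is $\partial_\Box(f)=(f-s_\Box f)/(x_1+x_2)$, where $s_\Box$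 sends $(x_1,x_2)\mapsto(-x_2,-x_1)$ and fixes $x_3,\ldots,x_n$. (For nonzero $\mu\in\mathcal{D}_{n-1}$, $\partial_\Box(\widetilde P_\mu(X))$ equals the type $D$ Schubert polynomial $\mathfrak{D}'_\mu(X)=\mathfrak{D}_{w_\mu s_\Box}(X)$ representing a Schubert class on $SO_{2n}/B$.) *)

theory Defs
  imports Complex_Main "HOL-Combinatorics.Permutations"
begin

text \<open>Points of affine n-space over the rationals: x :: nat => rat, coordinates x 1, ..., x n.
 A polynomial in A[X], A = Z[1/2] (a subring of Q), is represented by its polynomial function on Q^n.\<close>

definition esym :: "nat \<Rightarrow> nat \<Rightarrow> (nat \<Rightarrow> rat) \<Rightarrow> rat" where
  "esym n i x = (\<Sum>S\<in>{S. S \<subseteq> {1..n} \<and> card S = i}. \<Prod>k\<in>S. x k)"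

definition Pt1 :: "nat \<Rightarrow> nat \<Rightarrow> (nat \<Rightarrow> rat) \<Rightarrow> rat" where
  "Pt1 n i x = (if i = 0 then 1 else esym n i x / 2)"

text \<open>Ptilde_{i,j} (used for i >= j >= 0).\<close>
definition Pt2 :: "nat \<Rightarrow> nat \<Rightarrow> nat \<Rightarrow> (nat \<Rightarrow> rat) \<Rightarrow> rat" where
  "Pt2 n i j x = Pt1 n i x * Pt1 n j x
     + 2 * (\<Sum>k\<in>{1..<j}. (-1)^k * Pt1 n (i+k) x * Pt1 n (j-k) x)
     + (-1)^j * Pt1 n (i+j) x"

definition skew :: "(nat \<Rightarrow> nat \<Rightarrow> rat) \<Rightarrow> nat \<Rightarrow> nat \<Rightarrow> rat" where
  "skew a i j = (if i < j then a i j else if j < i then - a j i else 0)"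

definition pfaffian :: "nat \<Rightarrow> (nat \<Rightarrow> nat \<Rightarrow> rat) \<Rightarrow> rat" where
  "pfaffian k a = (\<Sum>\<sigma>\<in>{\<sigma>. \<sigma> permutes {0..<2*k}}.
       of_int (sign \<sigma>) * (\<Prod>i<k. skew a (\<sigma> (2*i)) (\<sigma> (2*i+1))))
     / (2^k * fact k)"

text \<open>The j-th part (1-indexed) of a partition given as a list, padded with zeros.\<close>
definition part :: "nat list \<Rightarrow> nat \<Rightarrow> nat" where
  "part mu j = (if 1 \<le> j \<and> j \<le> length mu then mu ! (j - 1) else 0)"

text \<open>Ptilde_mu for a partition mu (decreasing list) of length m:
 Pfaffian of [Ptilde_{mu_i,mu_j}], 1 <= i < j <= 2 floor((m+1)/2).\<close>
definition PtP :: "nat \<Rightarrow> nat list \<Rightarrow> (nat \<Rightarrow> rat) \<Rightarrow> rat" where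
  "PtP n mu x = pfaffian ((length mu + 1) div 2)
      (\<lambda>i j. Pt2 n (part mu (i+1)) (part mu (j+1)) x)"

text \<open>Strict partitions with all parts <= n (D_n), as strictly decreasing lists of positive parts.\<close>
definition strict_partition_le :: "nat \<Rightarrow> nat list \<Rightarrow> bool" where
  "strict_partition_le n lam \<longleftrightarrow> sorted_wrt (>) lam \<and> (\<forall>p\<in>set lam. 1 \<le> p \<and> p \<le> n)"

definition remove_parts :: "nat list \<Rightarrow> nat set \<Rightarrow> nat list" where
  "remove_parts lam S = filter (\<lambda>p. p \<notin> S) lam"

definition sbox :: "(nat \<Rightarrow> rat) \<Rightarrow> nat \<Rightarrow> rat" where
  "sbox x = x(1 := - x 2, 2 := - x 1)"

definition dbox :: "((nat \<Rightarrow> rat) \<Rightarrow> rat) \<Rightarrow> (nat \<Rightarrow> rat) \<Rightarrow> rat" where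
  "dbox f x = (f x - f (sbox x)) / (x 1 + x 2)"

end

theory Submission
  imports Defs
begin

text \<open>
  Write t = x_1 + x_2 and p = x_1 x_2. Splitting off x_1 and x_2 gives 2 Ptilde_i = w_i + t u_i,
  where u_i and w_i only depend on p and x_3, ..., x_n; hence s_box fixes u_i and w_i and
  negates t. It follows that Ptilde_{a,b}(x) - Ptilde_{a,b}(s_box x) = 2 t (u_a beta_b - u_b beta_a)
  is a rank-two alternating form, so the matrix [Ptilde_{lambda_u,lambda_v}] is X + t (alpha wedge beta)
  at x and X - t (alpha wedge beta) at s_box x.

  Pfaffians of X + tau (alpha wedge beta) are affine in tau: in the expansion over permutations,
  the terms with at least two wedge factors cancel by the Pluecker relation. Thus partial_Box of
  each factor of the sum is twice its tau-coefficient, and the sum becomes 4 (H 1 - H 0), where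
  F tau = tau H tau is the expansion along the last column of the Pfaffian F of
  X' + tau (alpha wedge beta), X' being X with its last column replaced by zero. Since F and H
  are both affine, H is constant.
\<close>

section \<open>Pfaffians as sums over permutations\<close>

definition pfaffian_term :: "(nat \<Rightarrow> nat \<Rightarrow> rat) \<Rightarrow> nat \<Rightarrow> (nat \<Rightarrow> nat) \<Rightarrow> rat" where
  "pfaffian_term a k \<sigma> = of_int (sign \<sigma>) * (\<Prod>i<k. skew a (\<sigma> (2*i)) (\<sigma> (2*i+1)))"

lemma pfaffian_eq_sum_terms:
  "pfaffian k a = (\<Sum>\<sigma>\<in>{\<sigma>. \<sigma> permutes {0..<2*k}}. pfaffian_term a k \<sigma>) / (2^k * fact k)"
  unfolding pfaffian_def pfaffian_term_def by simp

lemma permutes_atLeast0LessThan_less: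
  "\<sigma> permutes {0..<N} \<Longrightarrow> x < N \<Longrightarrow> \<sigma> x < (N::nat)"
  using permutes_in_image[of \<sigma> "{0..<N}" x] by auto

lemma pfaffian_cong:
  assumes "\<And>u v. u < v \<Longrightarrow> v < 2*k \<Longrightarrow> a u v = b u v"
  shows "pfaffian k a = pfaffian k b"
proof -
  have "skew a u v = skew b u v" if "u < 2*k" "v < 2*k" for u v
    using assms that by (auto simp: skew_def)
  then have "pfaffian_term a k \<sigma> = pfaffian_term b k \<sigma>" if "\<sigma> permutes {0..<2*k}" for \<sigma>
    unfolding pfaffian_term_def using permutes_atLeast0LessThan_less[OF that]
    by (intro arg_cong2[where f="(*)"] refl prod.cong) auto
  then show ?thesis unfolding pfaffian_eq_sum_terms by simp
qed

lemma sum_permutes_comp_involution: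
  assumes "t permutes {0..<N}" "t \<circ> t = id"
  shows "(\<Sum>\<sigma>\<in>{\<sigma>. \<sigma> permutes {0..<N}}. g (\<sigma> \<circ> t))
    = (\<Sum>\<sigma>\<in>{\<sigma>. \<sigma> permutes {0..<N}}. (g \<sigma> :: 'a::comm_monoid_add))"
  by (rule sum.reindex_bij_witness[where i="\<lambda>\<sigma>. \<sigma> \<circ> t" and j="\<lambda>\<sigma>. \<sigma> \<circ> t"])
    (use assms in \<open>auto simp: comp_assoc intro: permutes_compose\<close>)

lemma sign_comp_transpose:
  assumes "\<sigma> permutes {0..<(N::nat)}" "a \<noteq> b"
  shows "sign (\<sigma> \<circ> transpose a b) = - sign \<sigma>"
proof -
  have "permutation \<sigma>" using assms(1) permutes_imp_permutation by blast
  then show ?thesis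
    using assms(2) by (simp add: sign_compose permutation_swap_id sign_swap_id)
qed

lemma pfaffian_term_comp_transpose_pair:
  assumes "\<sigma> permutes {0..<2*k}" "l < k"
  shows "pfaffian_term a k (\<sigma> \<circ> transpose (2*l) (2*l+1)) = pfaffian_term a k \<sigma>"
proof -
  let ?t = "transpose (2*l) (2*l+1)"
  let ?g = "\<lambda>\<sigma> i. skew a (\<sigma> (2*i)) (\<sigma> (2*i+1))"
  have l: "l \<in> {..<k}" using assms by simp
  have "(\<Prod>i\<in>{..<k}-{l}. ?g (\<sigma> \<circ> ?t) i) = (\<Prod>i\<in>{..<k}-{l}. ?g \<sigma> i)"
    by (rule prod.cong) (auto simp: transpose_def)
  moreover have "?g (\<sigma> \<circ> ?t) l = - ?g \<sigma> l"
    by (auto simp: transpose_def skew_def)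
  moreover have "sign (\<sigma> \<circ> ?t) = - sign \<sigma>"
    using sign_comp_transpose[OF assms(1)] by simp
  ultimately show ?thesis
    unfolding pfaffian_term_def prod.remove[OF finite_lessThan l] by simp
qed

lemma pfaffian_term_comp_swap_pairs:
  assumes "\<sigma> permutes {0..<2*k}" "l < k" "i < k"
  shows "pfaffian_term a k (\<sigma> \<circ> (transpose (2*i) (2*l) \<circ> transpose (2*i+1) (2*l+1)))
    = pfaffian_term a k \<sigma>"
proof -
  let ?t = "transpose (2*i) (2*l) \<circ> transpose (2*i+1) (2*l+1)"
  let ?g = "\<lambda>\<sigma> i. skew a (\<sigma> (2*i)) (\<sigma> (2*i+1))"
  have "(\<Prod>j<k. ?g (\<sigma> \<circ> ?t) j) = (\<Prod>j<k. ?g (\<sigma> \<circ> ?t) (transpose i l j))"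
    by (rule prod.reindex_bij_witness[where i="transpose i l" and j="transpose i l"])
      (use assms in \<open>auto simp: transpose_def\<close>)
  also have "\<dots> = (\<Prod>j<k. ?g \<sigma> j)"
    by (rule prod.cong) (auto simp: transpose_def)
  finally have "(\<Prod>j<k. ?g (\<sigma> \<circ> ?t) j) = (\<Prod>j<k. ?g \<sigma> j)" .
  moreover have "sign (\<sigma> \<circ> ?t) = sign \<sigma>"
    using assms permutes_imp_permutation[OF _ assms(1)]
    by (simp add: sign_compose permutation_swap_id sign_swap_id permutation_compose)
  ultimately show ?thesis unfolding pfaffian_term_def by simp
qed

section \<open>Affine functions of one rational variable\<close>

definition affine_rat :: "(rat \<Rightarrow> rat) \<Rightarrow> bool" where
  "affine_rat f \<longleftrightarrow> (\<forall>\<tau>. f \<tau> = f 0 + \<tau> * (f 1 - f 0))"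

lemma affine_ratI:
  assumes "\<And>\<tau>. f \<tau> = a + \<tau> * b"
  shows "affine_rat f"
  unfolding affine_rat_def using assms by simp

lemma affine_ratD: "affine_rat f \<Longrightarrow> f \<tau> = f 0 + \<tau> * (f 1 - f 0)"
  unfolding affine_rat_def by blast

lemma affine_rat_sum:
  assumes "\<And>j. j \<in> J \<Longrightarrow> affine_rat (f j)"
  shows "affine_rat (\<lambda>\<tau>. \<Sum>j\<in>J. c j * f j \<tau>)"
proof (rule affine_ratI)
  fix \<tau>
  have "c j * f j \<tau> = c j * f j 0 + \<tau> * (c j * (f j 1 - f j 0))" if "j \<in> J" for j
    unfolding affine_ratD[OF assms[OF that], of \<tau>] by (simp add: algebra_simps)
  then show "(\<Sum>j\<in>J. c j * f j \<tau>) = (\<Sum>j\<in>J. c j * f j 0) + \<tau> * (\<Sum>j\<in>J. c j * (f j 1 - f j 0))"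
    by (simp add: sum.distrib sum_distrib_left cong: sum.cong)
qed

lemma affine_rat_mult_var_imp_const:
  assumes "affine_rat (\<lambda>\<tau>. \<tau> * h \<tau>)" and "affine_rat h"
  shows "h 1 = h 0"
  using affine_ratD[OF assms(1), of 2] affine_ratD[OF assms(2), of 2] by simp

section \<open>Pfaffians of rank-two perturbations\<close>

definition wedge :: "(nat \<Rightarrow> rat) \<Rightarrow> (nat \<Rightarrow> rat) \<Rightarrow> nat \<Rightarrow> nat \<Rightarrow> rat" where
  "wedge \<alpha> \<beta> u v = \<alpha> u * \<beta> v - \<alpha> v * \<beta> u"

lemma wedge_pluecker:
  "wedge \<alpha> \<beta> a b * wedge \<alpha> \<beta> c d - wedge \<alpha> \<beta> a c * wedge \<alpha> \<beta> b d
     - wedge \<alpha> \<beta> a d * wedge \<alpha> \<beta> c b = 0"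
  unfolding wedge_def by (simp add: algebra_simps)

lemma skew_add_wedge:
  "skew (\<lambda>u v. X u v + \<tau> * wedge \<alpha> \<beta> u v) u v = skew X u v + \<tau> * wedge \<alpha> \<beta> u v"
  by (auto simp: skew_def wedge_def algebra_simps)

definition mixed_term ::
    "(nat \<Rightarrow> nat \<Rightarrow> rat) \<Rightarrow> (nat \<Rightarrow> rat) \<Rightarrow> (nat \<Rightarrow> rat) \<Rightarrow> nat \<Rightarrow> nat set \<Rightarrow> (nat \<Rightarrow> nat) \<Rightarrow> rat" where
  "mixed_term X \<alpha> \<beta> k B \<sigma> = of_int (sign \<sigma>) *
     (\<Prod>i<k. (if i \<in> B then wedge \<alpha> \<beta> else skew X) (\<sigma> (2*i)) (\<sigma> (2*i+1)))"

lemma sum_permutes_eq_zero_three_term: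
  fixes f :: "(nat \<Rightarrow> nat) \<Rightarrow> rat"
  assumes "s permutes {0..<N}" "s \<circ> s = id" "t permutes {0..<N}" "t \<circ> t = id"
    and "\<And>\<sigma>. \<sigma> permutes {0..<N} \<Longrightarrow> f \<sigma> + f (\<sigma> \<circ> s) + f (\<sigma> \<circ> t) = 0"
  shows "(\<Sum>\<sigma>\<in>{\<sigma>. \<sigma> permutes {0..<N}}. f \<sigma>) = 0"
proof -
  let ?P = "{\<sigma>. \<sigma> permutes {0..<N}}"
  have "3 * (\<Sum>\<sigma>\<in>?P. f \<sigma>) = (\<Sum>\<sigma>\<in>?P. f \<sigma>) + (\<Sum>\<sigma>\<in>?P. f (\<sigma> \<circ> s)) + (\<Sum>\<sigma>\<in>?P. f (\<sigma> \<circ> t))"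
    using sum_permutes_comp_involution[OF assms(1,2), of f]
      sum_permutes_comp_involution[OF assms(3,4), of f] by simp
  also have "\<dots> = 0"
    using assms(5) by (simp add: sum.distrib[symmetric])
  finally show ?thesis by simp
qed

lemma prod_lessThan_split_two:
  fixes k :: nat and g :: "nat \<Rightarrow> 'a::comm_monoid_mult"
  assumes "i1 < k" "i2 < k" "i1 \<noteq> i2"
  shows "(\<Prod>i<k. g i) = g i1 * g i2 * (\<Prod>i\<in>{..<k}-{i1,i2}. g i)"
proof -
  have "(\<Prod>i<k. g i) = g i1 * (\<Prod>i\<in>{..<k}-{i1}. g i)"
    using assms(1) by (intro prod.remove) auto
  also have "(\<Prod>i\<in>{..<k}-{i1}. g i) = g i2 * (\<Prod>i\<in>{..<k}-{i1}-{i2}. g i)"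
    using assms by (intro prod.remove) auto
  finally show ?thesis by (simp add: Diff_insert2[symmetric] insert_commute mult.assoc)
qed

lemma mixed_term_pluecker:
  assumes \<sigma>: "\<sigma> permutes {0..<2*k}" and B: "i1 \<in> B" "i2 \<in> B" "i1 \<noteq> i2" "i1 < k" "i2 < k"
  defines "t1 \<equiv> transpose (2*i1+1) (2*i2)" and "t2 \<equiv> transpose (2*i1+1) (2*i2+1)"
  shows "mixed_term X \<alpha> \<beta> k B \<sigma> + mixed_term X \<alpha> \<beta> k B (\<sigma> \<circ> t1)
    + mixed_term X \<alpha> \<beta> k B (\<sigma> \<circ> t2) = 0"
proof -
  let ?E = "\<lambda>i. if i \<in> B then wedge \<alpha> \<beta> else skew X"
  let ?W = "wedge \<alpha> \<beta>"
  let ?g = "\<lambda>\<sigma> i. ?E i (\<sigma> (2*i)) (\<sigma> (2*i+1))"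
  define R where "R = (\<Prod>i\<in>{..<k}-{i1,i2}. ?g \<sigma> i)"
  have R: "(\<Prod>i\<in>{..<k}-{i1,i2}. ?g (\<sigma> \<circ> t) i) = R"
    if "t = t1 \<or> t = t2" for t
    unfolding R_def using that by (intro prod.cong) (auto simp: t1_def t2_def transpose_def)
  have "mixed_term X \<alpha> \<beta> k B (\<sigma> \<circ> t1) = - of_int (sign \<sigma>) *
      (?W (\<sigma> (2*i1)) (\<sigma> (2*i2)) * ?W (\<sigma> (2*i1+1)) (\<sigma> (2*i2+1))) * R"
    using R[of t1] sign_comp_transpose[OF \<sigma>, of "2*i1+1" "2*i2"] B
    unfolding mixed_term_def prod_lessThan_split_two[OF B(4,5,3)] t1_def
    by (simp add: transpose_def)
  moreover have "mixed_term X \<alpha> \<beta> k B (\<sigma> \<circ> t2) = - of_int (sign \<sigma>) *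
      (?W (\<sigma> (2*i1)) (\<sigma> (2*i2+1)) * ?W (\<sigma> (2*i2)) (\<sigma> (2*i1+1))) * R"
    using R[of t2] sign_comp_transpose[OF \<sigma>, of "2*i1+1" "2*i2+1"] B
    unfolding mixed_term_def prod_lessThan_split_two[OF B(4,5,3)] t2_def
    by (simp add: transpose_def)
  moreover have "mixed_term X \<alpha> \<beta> k B \<sigma> = of_int (sign \<sigma>) *
      (?W (\<sigma> (2*i1)) (\<sigma> (2*i1+1)) * ?W (\<sigma> (2*i2)) (\<sigma> (2*i2+1))) * R"
    using B unfolding mixed_term_def prod_lessThan_split_two[OF B(4,5,3)] R_def by simp
  ultimately have "mixed_term X \<alpha> \<beta> k B \<sigma> + mixed_term X \<alpha> \<beta> k B (\<sigma> \<circ> t1)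
      + mixed_term X \<alpha> \<beta> k B (\<sigma> \<circ> t2) = of_int (sign \<sigma>) * R *
      (?W (\<sigma> (2*i1)) (\<sigma> (2*i1+1)) * ?W (\<sigma> (2*i2)) (\<sigma> (2*i2+1))
       - ?W (\<sigma> (2*i1)) (\<sigma> (2*i2)) * ?W (\<sigma> (2*i1+1)) (\<sigma> (2*i2+1))
       - ?W (\<sigma> (2*i1)) (\<sigma> (2*i2+1)) * ?W (\<sigma> (2*i2)) (\<sigma> (2*i1+1)))"
    by (simp only:) (simp add: algebra_simps)
  then show ?thesis by (simp only: wedge_pluecker mult_zero_right)
qed

lemma sum_mixed_term_eq_zero:
  assumes "B \<subseteq> {..<k}" "2 \<le> card B"
  shows "(\<Sum>\<sigma>\<in>{\<sigma>. \<sigma> permutes {0..<2*k}}. mixed_term X \<alpha> \<beta> k B \<sigma>) = 0"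
proof -
  have "finite B" using assms(1) finite_subset by blast
  then obtain i1 i2 where i: "i1 \<in> B" "i2 \<in> B" "i1 \<noteq> i2"
    using assms(2) card_le_Suc0_iff_eq[of B] by fastforce
  then have "i1 < k" "i2 < k" using assms(1) by auto
  then show ?thesis
    by (intro sum_permutes_eq_zero_three_term[where s = "transpose (2*i1+1) (2*i2)"
          and t = "transpose (2*i1+1) (2*i2+1)"] transpose_comp_involutory permutes_swap_id
        mixed_term_pluecker[OF _ i]) auto
qed

lemma pfaffian_term_add_wedge:
  "pfaffian_term (\<lambda>u v. X u v + \<tau> * wedge \<alpha> \<beta> u v) k \<sigma>
     = (\<Sum>B\<in>Pow {..<k}. \<tau> ^ card B * mixed_term X \<alpha> \<beta> k B \<sigma>)"
proof -
  let ?W = "\<lambda>i. wedge \<alpha> \<beta> (\<sigma> (2*i)) (\<sigma> (2*i+1))"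
  let ?S = "\<lambda>i. skew X (\<sigma> (2*i)) (\<sigma> (2*i+1))"
  have "(\<Prod>i<k. skew (\<lambda>u v. X u v + \<tau> * wedge \<alpha> \<beta> u v) (\<sigma> (2*i)) (\<sigma> (2*i+1)))
      = (\<Prod>i<k. \<tau> * ?W i + ?S i)"
    by (simp add: skew_add_wedge add.commute)
  also have "\<dots> = (\<Sum>B\<in>Pow {..<k}. (\<Prod>i\<in>B. \<tau> * ?W i) * (\<Prod>i\<in>{..<k}-B. ?S i))"
    by (rule prod_add) simp
  also have "\<dots> = (\<Sum>B\<in>Pow {..<k}. \<tau> ^ card B *
      (\<Prod>i<k. (if i \<in> B then wedge \<alpha> \<beta> else skew X) (\<sigma> (2*i)) (\<sigma> (2*i+1))))"
  proof (rule sum.cong[OF refl])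
    fix B assume "B \<in> Pow {..<k}"
    then have "{..<k} \<inter> B = B" "{..<k} \<inter> - B = {..<k} - B" by auto
    then show "(\<Prod>i\<in>B. \<tau> * ?W i) * (\<Prod>i\<in>{..<k}-B. ?S i) = \<tau> ^ card B *
      (\<Prod>i<k. (if i \<in> B then wedge \<alpha> \<beta> else skew X) (\<sigma> (2*i)) (\<sigma> (2*i+1)))"
      by (simp add: prod.distrib prod.If_cases if_distrib[of "\<lambda>f. f _ _"])
  qed
  finally show ?thesis
    unfolding pfaffian_term_def mixed_term_def by (simp add: sum_distrib_left algebra_simps)
qed

lemma pfaffian_add_wedge_affine:
  "affine_rat (\<lambda>\<tau>. pfaffian k (\<lambda>u v. X u v + \<tau> * wedge \<alpha> \<beta> u v))"
proof -
  define T where "T B = (\<Sum>\<sigma>\<in>{\<sigma>. \<sigma> permutes {0..<2*k}}. mixed_term X \<alpha> \<beta> k B \<sigma>)" for B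
  define c :: rat where "c = 2^k * fact k"
  have pf: "pfaffian k (\<lambda>u v. X u v + \<tau> * wedge \<alpha> \<beta> u v)
      = (\<Sum>B\<in>Pow {..<k}. \<tau> ^ card B * T B) / c" for \<tau>
    unfolding pfaffian_eq_sum_terms pfaffian_term_add_wedge T_def c_def
    by (simp add: sum_distrib_left sum.swap[where B = "Pow {..<k}"])
  have "\<tau> ^ card B * T B = (if card B = 0 then T B else 0) + \<tau> * (if card B = 1 then T B else 0)"
    if "B \<in> Pow {..<k}" for B \<tau>
    using sum_mixed_term_eq_zero[of B k] that unfolding T_def
    by (cases "card B \<ge> 2") (auto simp: not_le numeral_2_eq_2 less_Suc_eq)
  then show ?thesis
    unfolding pf
    by (intro affine_ratI[where a = "(\<Sum>B\<in>Pow {..<k}. if card B = 0 then T B else 0) / c"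
          and b = "(\<Sum>B\<in>Pow {..<k}. if card B = 1 then T B else 0) / c"])
      (simp add: sum.distrib sum_distrib_left add_divide_distrib)
qed

lemma pfaffian_add_wedge_comp_affine:
  "affine_rat (\<lambda>\<tau>. pfaffian k (\<lambda>u v. X u v + \<tau> * wedge \<alpha> \<beta> (f u) (f v)))"
  using pfaffian_add_wedge_affine[of k X "\<alpha> \<circ> f" "\<beta> \<circ> f"] by (simp add: wedge_def)

section \<open>Expansion along the last column\<close>

definition skip :: "nat \<Rightarrow> nat \<Rightarrow> nat" where
  "skip j u = (if u < j then u else Suc u)"

definition skip_perm :: "nat \<Rightarrow> nat \<Rightarrow> nat \<Rightarrow> nat" where
  "skip_perm M j u = (if u < M then skip j u else if u = M then j else u)"

lemma skip_perm_self: "skip_perm M M = id"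
  by (rule ext) (simp add: skip_perm_def skip_def)

lemma skip_perm_step: "j < M \<Longrightarrow> skip_perm M j = transpose j (Suc j) \<circ> skip_perm M (Suc j)"
  by (rule ext) (auto simp: skip_perm_def skip_def transpose_def)

lemma skip_perm_permutes_sign:
  "j \<le> M \<Longrightarrow> skip_perm M j permutes {0..<Suc M} \<and> sign (skip_perm M j) = (-1)^(M-j)"
proof (induction "M - j" arbitrary: j)
  case 0
  then show ?case using permutes_id[of "{0..<Suc M}"] by (simp add: skip_perm_self id_def)
next
  case (Suc d)
  then have j: "j < M" by simp
  have IH: "skip_perm M (Suc j) permutes {0..<Suc M}" "sign (skip_perm M (Suc j)) = (-1)^(M - Suc j)"
    using Suc j by (metis Suc_diff_Suc Suc_leI diff_Suc_1)+
  have "transpose j (Suc j) permutes {0..<Suc M}" using j by (intro permutes_swap_id) auto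
  moreover have "sign (transpose j (Suc j) \<circ> skip_perm M (Suc j)) = - ((-1)^(M - Suc j))"
    using IH permutes_imp_permutation[OF _ IH(1)]
    by (simp add: sign_compose permutation_swap_id sign_swap_id)
  moreover have "(-1::int)^(M - j) = - ((-1)^(M - Suc j))"
    using j by (simp add: Suc_diff_Suc[symmetric])
  ultimately show ?case unfolding skip_perm_step[OF j] using IH(1) permutes_compose by metis
qed

lemma skew_skip: "skew a (skip j u) (skip j v) = skew (\<lambda>u v. a (skip j u) (skip j v)) u v"
  by (auto simp: skew_def skip_def)

lemma pfaffian_term_skip_perm_comp:
  assumes \<rho>: "\<rho> permutes {0..<2*k}" and j: "j \<le> 2*k"
  shows "pfaffian_term a (Suc k) (skip_perm (2*k) j \<circ> \<rho>)
    = (-1)^j * a j (2*k+1) * pfaffian_term (\<lambda>u v. a (skip j u) (skip j v)) k \<rho>"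
proof -
  let ?\<pi> = "skip_perm (2*k) j"
  have \<pi>: "?\<pi> permutes {0..<Suc (2*k)}" "sign ?\<pi> = (-1)^(2*k-j)"
    using skip_perm_permutes_sign[OF j] by auto
  have "sign (?\<pi> \<circ> \<rho>) = sign ?\<pi> * sign \<rho>"
    using permutes_imp_permutation[OF _ \<pi>(1)] permutes_imp_permutation[OF _ \<rho>]
    by (simp add: sign_compose)
  moreover have "(-1::int)^(2*k-j) = (-1)^j"
    using j by (auto simp: minus_one_power_iff)
  moreover have "\<rho> (2*k) = 2*k" "\<rho> (2*k+1) = 2*k+1"
    using permutes_not_in[OF \<rho>] by auto
  moreover have "(\<Prod>i<k. skew a ((?\<pi> \<circ> \<rho>) (2*i)) ((?\<pi> \<circ> \<rho>) (2*i+1)))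
      = (\<Prod>i<k. skew (\<lambda>u v. a (skip j u) (skip j v)) (\<rho> (2*i)) (\<rho> (2*i+1)))"
    using permutes_atLeast0LessThan_less[OF \<rho>]
    by (intro prod.cong) (auto simp: skip_perm_def skew_skip)
  ultimately show ?thesis
    using \<pi>(2) j unfolding pfaffian_term_def
    by (simp add: skip_perm_def skew_def)
qed

lemma sum_permutes_agreeing_outside:
  fixes F :: "('a \<Rightarrow> 'a) \<Rightarrow> 'b::comm_monoid_add"
  assumes \<pi>: "\<pi> permutes T" and S: "S \<subseteq> T"
  shows "(\<Sum>\<sigma>\<in>{\<sigma>. \<sigma> permutes T \<and> (\<forall>x\<in>T - S. \<sigma> x = \<pi> x)}. F \<sigma>)
    = (\<Sum>\<rho>\<in>{\<rho>. \<rho> permutes S}. F (\<pi> \<circ> \<rho>))"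
proof (rule sum.reindex_bij_witness[where j="\<lambda>\<sigma>. inv \<pi> \<circ> \<sigma>" and i="\<lambda>\<rho>. \<pi> \<circ> \<rho>"])
  fix \<sigma> assume \<sigma>: "\<sigma> \<in> {\<sigma>. \<sigma> permutes T \<and> (\<forall>x\<in>T - S. \<sigma> x = \<pi> x)}"
  show "\<pi> \<circ> (inv \<pi> \<circ> \<sigma>) = \<sigma>"
    by (simp add: comp_assoc[symmetric] permutes_inv_o[OF \<pi>])
  then show "F (\<pi> \<circ> (inv \<pi> \<circ> \<sigma>)) = F \<sigma>"
    by simp
  have "(inv \<pi> \<circ> \<sigma>) x = x" if "x \<in> T - S" for x
    using \<sigma> that permutes_inverses[OF \<pi>] by auto
  moreover have "inv \<pi> \<circ> \<sigma> permutes T"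
    using \<sigma> permutes_compose[OF _ permutes_inv[OF \<pi>]] by simp
  ultimately show "inv \<pi> \<circ> \<sigma> \<in> {\<rho>. \<rho> permutes S}"
    using permutes_superset by blast
next
  fix \<rho> assume "\<rho> \<in> {\<rho>. \<rho> permutes S}"
  then have \<rho>: "\<rho> permutes S" by simp
  show "inv \<pi> \<circ> (\<pi> \<circ> \<rho>) = \<rho>"
    by (simp add: comp_assoc[symmetric] permutes_inv_o[OF \<pi>])
  show "\<pi> \<circ> \<rho> \<in> {\<sigma>. \<sigma> permutes T \<and> (\<forall>x\<in>T - S. \<sigma> x = \<pi> x)}"
    using permutes_compose[OF permutes_subset[OF \<rho> S] \<pi>] permutes_not_in[OF \<rho>] by auto
qed

lemma sum_pfaffian_term_fixing_last_pair:
  assumes j: "j < 2*k+1"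
  shows "(\<Sum>\<sigma>\<in>{\<sigma>. \<sigma> permutes {0..<2 * Suc k} \<and> \<sigma> (2*k+1) = 2*k+1 \<and> \<sigma> (2*k) = j}.
      pfaffian_term a (Suc k) \<sigma>)
    = (-1)^j * a j (2*k+1) *
      (\<Sum>\<rho>\<in>{\<rho>. \<rho> permutes {0..<2*k}}. pfaffian_term (\<lambda>u v. a (skip j u) (skip j v)) k \<rho>)"
proof -
  let ?\<pi> = "skip_perm (2*k) j"
  have "?\<pi> permutes {0..<Suc (2*k)}"
    using skip_perm_permutes_sign j by simp
  then have \<pi>: "?\<pi> permutes {0..<2 * Suc k}"
    by (rule permutes_subset) auto
  have "{0..<2 * Suc k} - {0..<2*k} = {2*k, 2*k+1}"
    by auto
  then have "{\<sigma>. \<sigma> permutes {0..<2 * Suc k} \<and> \<sigma> (2*k+1) = 2*k+1 \<and> \<sigma> (2*k) = j}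
      = {\<sigma>. \<sigma> permutes {0..<2 * Suc k} \<and> (\<forall>x\<in>{0..<2 * Suc k} - {0..<2*k}. \<sigma> x = ?\<pi> x)}"
    using j by (auto simp: skip_perm_def)
  then have "(\<Sum>\<sigma>\<in>{\<sigma>. \<sigma> permutes {0..<2 * Suc k} \<and> \<sigma> (2*k+1) = 2*k+1 \<and> \<sigma> (2*k) = j}.
      pfaffian_term a (Suc k) \<sigma>)
    = (\<Sum>\<rho>\<in>{\<rho>. \<rho> permutes {0..<2*k}}. pfaffian_term a (Suc k) (?\<pi> \<circ> \<rho>))"
    using sum_permutes_agreeing_outside[OF \<pi>, of "{0..<2*k}"] by auto
  also have "\<dots> = (-1)^j * a j (2*k+1) *
      (\<Sum>\<rho>\<in>{\<rho>. \<rho> permutes {0..<2*k}}. pfaffian_term (\<lambda>u v. a (skip j u) (skip j v)) k \<rho>)"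
    using pfaffian_term_skip_perm_comp j by (simp add: sum_distrib_left)
  finally show ?thesis .
qed

lemma ex_pfaffian_term_invariant_perm:
  assumes "p < 2 * Suc k"
  shows "\<exists>\<rho>. \<rho> permutes {0..<2 * Suc k} \<and> \<rho> (2*k+1) = p \<and>
    (\<forall>\<sigma>. \<sigma> permutes {0..<2 * Suc k} \<longrightarrow> pfaffian_term a (Suc k) (\<sigma> \<circ> \<rho>) = pfaffian_term a (Suc k) \<sigma>)"
proof -
  define i where "i = p div 2"
  define s where "s = transpose (2*i) (2*k) \<circ> transpose (2*i+1) (2*k+1)"
  define f where "f = (if even p then transpose (2*k) (2*k+1) else id)"
  have i: "i < Suc k" using assms unfolding i_def by simp
  have s: "s permutes {0..<2 * Suc k}" and f: "f permutes {0..<2 * Suc k}"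
    using i unfolding s_def f_def by (auto intro!: permutes_compose permutes_swap_id permutes_id)
  have "pfaffian_term a (Suc k) (\<sigma> \<circ> (s \<circ> f)) = pfaffian_term a (Suc k) \<sigma>"
    if \<sigma>: "\<sigma> permutes {0..<2 * Suc k}" for \<sigma>
  proof -
    have "pfaffian_term a (Suc k) (\<sigma> \<circ> s \<circ> f) = pfaffian_term a (Suc k) (\<sigma> \<circ> s)"
      unfolding f_def
      using pfaffian_term_comp_transpose_pair[OF permutes_compose[OF s \<sigma>], of k] by simp
    also have "\<dots> = pfaffian_term a (Suc k) \<sigma>"
      unfolding s_def using pfaffian_term_comp_swap_pairs[OF \<sigma>, of k i] i by simp
    finally show ?thesis by (simp add: comp_assoc)
  qed
  moreover have "(s \<circ> f) (2*k+1) = p"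
  proof -
    have "2*k \<noteq> 2*i+1" "2*i+1 \<noteq> 2*k" by presburger+
    then show ?thesis
      unfolding s_def f_def i_def by (cases "even p") (auto simp: transpose_def elim!: oddE)
  qed
  ultimately show ?thesis using permutes_compose[OF f s] by blast
qed

lemma sum_permutes_moving_point:
  fixes F :: "('a \<Rightarrow> 'a) \<Rightarrow> 'b::comm_monoid_add"
  assumes \<rho>: "\<rho> permutes S" "\<rho> m = p"
    and F: "\<And>\<sigma>. \<sigma> permutes S \<Longrightarrow> F (\<sigma> \<circ> \<rho>) = F \<sigma>"
  shows "(\<Sum>\<sigma>\<in>{\<sigma>. \<sigma> permutes S \<and> \<sigma> p = m}. F \<sigma>) = (\<Sum>\<sigma>\<in>{\<sigma>. \<sigma> permutes S \<and> \<sigma> m = m}. F \<sigma>)"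
proof -
  have "\<rho> \<circ> inv \<rho> = id" "inv \<rho> \<circ> \<rho> = id" "inv \<rho> p = m"
    using permutes_inv_o[OF \<rho>(1)] permutes_inv_eq[OF \<rho>(1)] \<rho>(2) by auto
  then show ?thesis
    by (intro sum.reindex_bij_witness[where j="\<lambda>\<sigma>. \<sigma> \<circ> \<rho>" and i="\<lambda>\<sigma>. \<sigma> \<circ> inv \<rho>"])
      (auto simp: comp_assoc \<rho>(2) F permutes_compose[OF \<rho>(1)]
        permutes_compose[OF permutes_inv[OF \<rho>(1)]])
qed

lemma sum_pfaffian_term_eq_fixing_last:
  "(\<Sum>\<sigma>\<in>{\<sigma>. \<sigma> permutes {0..<2 * Suc k}}. pfaffian_term a (Suc k) \<sigma>)
    = of_nat (2 * Suc k) *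
      (\<Sum>\<sigma>\<in>{\<sigma>. \<sigma> permutes {0..<2 * Suc k} \<and> \<sigma> (2*k+1) = 2*k+1}. pfaffian_term a (Suc k) \<sigma>)"
proof -
  let ?N = "2 * Suc k" and ?m = "2*k+1" and ?F = "pfaffian_term a (Suc k)"
  let ?P = "{\<sigma>. \<sigma> permutes {0..<?N}}"
  have "(\<Sum>\<sigma>\<in>?P. ?F \<sigma>) = (\<Sum>p<?N. \<Sum>\<sigma>\<in>{\<sigma>\<in>?P. inv \<sigma> ?m = p}. ?F \<sigma>)"
    by (rule sum.group[symmetric])
      (auto simp: finite_permutations permutes_atLeast0LessThan_less permutes_inv)
  also have "\<dots> = (\<Sum>p<?N. \<Sum>\<sigma>\<in>{\<sigma>. \<sigma> permutes {0..<?N} \<and> \<sigma> ?m = ?m}. ?F \<sigma>)"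
  proof (rule sum.cong[OF refl])
    fix p assume "p \<in> {..<?N}"
    then obtain \<rho> where "\<rho> permutes {0..<?N}" "\<rho> ?m = p"
      "\<forall>\<sigma>. \<sigma> permutes {0..<?N} \<longrightarrow> ?F (\<sigma> \<circ> \<rho>) = ?F \<sigma>"
      using ex_pfaffian_term_invariant_perm[of p k a] by auto
    moreover have "{\<sigma>\<in>?P. inv \<sigma> ?m = p} = {\<sigma>. \<sigma> permutes {0..<?N} \<and> \<sigma> p = ?m}"
      by (auto simp: permutes_inv_eq permutes_inverses)
    ultimately show "(\<Sum>\<sigma>\<in>{\<sigma>\<in>?P. inv \<sigma> ?m = p}. ?F \<sigma>)
      = (\<Sum>\<sigma>\<in>{\<sigma>. \<sigma> permutes {0..<?N} \<and> \<sigma> ?m = ?m}. ?F \<sigma>)"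
      using sum_permutes_moving_point[of _ "{0..<?N}" ?m p ?F] by simp
  qed
  finally show ?thesis by simp
qed

lemma sum_pfaffian_term_fixing_last:
  "(\<Sum>\<sigma>\<in>{\<sigma>. \<sigma> permutes {0..<2 * Suc k} \<and> \<sigma> (2*k+1) = 2*k+1}. pfaffian_term a (Suc k) \<sigma>)
    = (\<Sum>j<2*k+1. (-1)^j * a j (2*k+1) *
      (\<Sum>\<rho>\<in>{\<rho>. \<rho> permutes {0..<2*k}}. pfaffian_term (\<lambda>u v. a (skip j u) (skip j v)) k \<rho>))"
proof -
  let ?Q = "{\<sigma>. \<sigma> permutes {0..<2 * Suc k} \<and> \<sigma> (2*k+1) = 2*k+1}"
  have "\<sigma> (2*k) \<in> {..<2*k+1}" if "\<sigma> \<in> ?Q" for \<sigma>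
  proof -
    have \<sigma>: "\<sigma> permutes {0..<2 * Suc k}" "\<sigma> (2*k+1) = 2*k+1" using that by auto
    have "\<sigma> (2*k) \<noteq> \<sigma> (2*k+1)"
      using inj_eq[OF permutes_inj[OF \<sigma>(1)], of "2*k" "2*k+1"] by simp
    then show ?thesis using \<sigma> permutes_atLeast0LessThan_less[OF \<sigma>(1), of "2*k"] by auto
  qed
  moreover have "finite ?Q" by (simp add: finite_permutations)
  ultimately have "(\<Sum>\<sigma>\<in>?Q. pfaffian_term a (Suc k) \<sigma>)
      = (\<Sum>j<2*k+1. \<Sum>\<sigma>\<in>{\<sigma>\<in>?Q. \<sigma> (2*k) = j}. pfaffian_term a (Suc k) \<sigma>)"
    by (intro sum.group[symmetric]) auto
  also have "\<dots> = (\<Sum>j<2*k+1. (-1)^j * a j (2*k+1) *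
      (\<Sum>\<rho>\<in>{\<rho>. \<rho> permutes {0..<2*k}}. pfaffian_term (\<lambda>u v. a (skip j u) (skip j v)) k \<rho>))"
    using sum_pfaffian_term_fixing_last_pair by (intro sum.cong) simp_all
  finally show ?thesis .
qed

lemma pfaffian_expand_last_column:
  "pfaffian (Suc k) a
    = (\<Sum>j<2*k+1. (-1)^j * a j (2*k+1) * pfaffian k (\<lambda>u v. a (skip j u) (skip j v)))"
proof -
  define T where "T j = (\<Sum>\<rho>\<in>{\<rho>. \<rho> permutes {0..<2*k}}.
    pfaffian_term (\<lambda>u v. a (skip j u) (skip j v)) k \<rho>)" for j
  have d: "(2::rat) ^ Suc k * fact (Suc k) = of_nat (2 * Suc k) * (2^k * fact k)"
    by (simp add: algebra_simps)
  have "pfaffian (Suc k) a = (\<Sum>j<2*k+1. (-1)^j * a j (2*k+1) * T j) / (2^k * fact k)"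
    unfolding pfaffian_eq_sum_terms[of "Suc k"] sum_pfaffian_term_eq_fixing_last
      sum_pfaffian_term_fixing_last T_def[symmetric] d
    by (simp del: of_nat_mult)
  then show ?thesis
    unfolding pfaffian_eq_sum_terms[of k] T_def by (simp add: sum_divide_distrib[symmetric])
qed

lemma pfaffian_wedge_cross_sum:
  fixes X :: "nat \<Rightarrow> nat \<Rightarrow> rat" and \<alpha> \<beta> :: "nat \<Rightarrow> rat" and k :: nat
  defines "P j \<tau> \<equiv> pfaffian k (\<lambda>u v. X (skip j u) (skip j v) + \<tau> * wedge \<alpha> \<beta> (skip j u) (skip j v))"
  shows "(\<Sum>j<2*k+1. (-1)^j * wedge \<alpha> \<beta> j (2*k+1) * (P j 1 - P j 0)) = 0"
proof -
  let ?m = "2*k+1"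
  define H where "H \<tau> = (\<Sum>j<?m. (-1)^j * wedge \<alpha> \<beta> j ?m * P j \<tau>)" for \<tau>
  have "affine_rat (P j)" for j
    unfolding P_def by (rule pfaffian_add_wedge_comp_affine)
  then have H: "affine_rat H"
    unfolding H_def by (intro affine_rat_sum)
  define X' where "X' u v = (if v = ?m then 0 else X u v)" for u v
  have "pfaffian (Suc k) (\<lambda>u v. X' u v + \<tau> * wedge \<alpha> \<beta> u v) = \<tau> * H \<tau>" for \<tau>
  proof -
    have "pfaffian k (\<lambda>u v. X' (skip j u) (skip j v) + \<tau> * wedge \<alpha> \<beta> (skip j u) (skip j v)) = P j \<tau>"
      for j unfolding P_def X'_def by (intro pfaffian_cong) (auto simp: skip_def)
    then show ?thesis
      unfolding pfaffian_expand_last_column H_def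
      by (simp add: X'_def sum_distrib_left algebra_simps)
  qed
  then have "affine_rat (\<lambda>\<tau>. \<tau> * H \<tau>)"
    using pfaffian_add_wedge_affine[of "Suc k" X' \<alpha> \<beta>] by simp
  then have "H 1 = H 0"
    using H by (rule affine_rat_mult_var_imp_const)
  moreover have "(\<Sum>j<?m. (-1)^j * wedge \<alpha> \<beta> j ?m * (P j 1 - P j 0)) = H 1 - H 0"
    unfolding H_def sum_subtractf[symmetric] by (simp add: right_diff_distrib)
  ultimately show ?thesis by simp
qed

section \<open>Divided differences\<close>

lemma dbox_eq_affine:
  assumes "x 1 + x 2 \<noteq> 0" "affine_rat g"
    and "f x = g (x 1 + x 2)" "f (sbox x) = g (- (x 1 + x 2))"
  shows "dbox f x = 2 * (g 1 - g 0)"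
  using assms affine_ratD[OF assms(2), of "x 1 + x 2"] affine_ratD[OF assms(2), of "- (x 1 + x 2)"]
  unfolding dbox_def by (simp add: field_simps)

lemma dbox_pfaffian_cross_sum:
  fixes A :: "(nat \<Rightarrow> rat) \<Rightarrow> nat \<Rightarrow> nat \<Rightarrow> rat" and \<alpha> \<beta> :: "nat \<Rightarrow> rat"
  assumes t: "x 1 + x 2 \<noteq> 0"
    and A: "\<And>u v. u < v \<Longrightarrow> v \<le> 2*k+1 \<Longrightarrow>
      A x u v - A (sbox x) u v = 2 * (x 1 + x 2) * wedge \<alpha> \<beta> u v"
  shows "(\<Sum>j<2*k+1. (-1)^j * dbox (\<lambda>y. A y j (2*k+1)) x
      * dbox (\<lambda>y. pfaffian k (\<lambda>u v. A y (skip j u) (skip j v))) x) = 0"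
proof -
  let ?m = "2*k+1" and ?t = "x 1 + x 2" and ?W = "wedge \<alpha> \<beta>"
  define X where "X u v = (A x u v + A (sbox x) u v) / 2" for u v
  define P where "P j \<tau> = pfaffian k (\<lambda>u v. X (skip j u) (skip j v) + \<tau> * ?W (skip j u) (skip j v))"
    for j \<tau>
  have AX: "A x u v = X u v + ?t * ?W u v" "A (sbox x) u v = X u v + (- ?t) * ?W u v"
    if "u < v" "v \<le> ?m" for u v
    using A[OF that] unfolding X_def by (simp_all add: field_simps)
  have d1: "dbox (\<lambda>y. A y j ?m) x = 2 * ?W j ?m" if "j < ?m" for j
    using dbox_eq_affine[OF t, of "\<lambda>\<tau>. X j ?m + \<tau> * ?W j ?m"] AX[OF that]
    by (simp add: affine_ratI)
  have d2: "dbox (\<lambda>y. pfaffian k (\<lambda>u v. A y (skip j u) (skip j v))) x = 2 * (P j 1 - P j 0)"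
    for j
  proof (rule dbox_eq_affine[OF t])
    show "affine_rat (P j)"
      unfolding P_def by (rule pfaffian_add_wedge_comp_affine)
    have "skip j u < skip j v" "skip j v \<le> ?m" if "u < v" "v < 2*k" for u v
      using that by (auto simp: skip_def)
    then show "pfaffian k (\<lambda>u v. A x (skip j u) (skip j v)) = P j ?t"
      and "pfaffian k (\<lambda>u v. A (sbox x) (skip j u) (skip j v)) = P j (- ?t)"
      unfolding P_def by (auto intro!: pfaffian_cong simp: AX)
  qed
  have "(\<Sum>j<?m. (-1)^j * dbox (\<lambda>y. A y j ?m) x
      * dbox (\<lambda>y. pfaffian k (\<lambda>u v. A y (skip j u) (skip j v))) x)
    = 4 * (\<Sum>j<?m. (-1)^j * ?W j ?m * (P j 1 - P j 0))"
    unfolding sum_distrib_left d2 using d1 by (intro sum.cong refl) (simp add: algebra_simps)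
  also have "\<dots> = 0"
    unfolding P_def by (simp only: pfaffian_wedge_cross_sum mult_zero_right)
  finally show ?thesis .
qed

section \<open>The polynomials Ptilde under s_box\<close>

definition Pt2_of :: "(nat \<Rightarrow> rat) \<Rightarrow> nat \<Rightarrow> nat \<Rightarrow> rat" where
  "Pt2_of Q i j = Q i * Q j + 2 * (\<Sum>k\<in>{1..<j}. (-1)^k * Q (i+k) * Q (j-k)) + (-1)^j * Q (i+j)"

lemma Pt2_eq_Pt2_of: "Pt2 n i j x = Pt2_of (\<lambda>i. Pt1 n i x) i j"
  unfolding Pt2_def Pt2_of_def by simp

lemma Pt2_of_Suc_Suc:
  "Pt2_of Q a (Suc (Suc c)) + Pt2_of Q (Suc a) (Suc c) = Q a * Q (Suc (Suc c)) - Q (Suc a) * Q (Suc c)"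
proof -
  define f where "f k = (-1)^k * Q (a+k) * Q (Suc (Suc c) - k)" for k
  have "(\<Sum>k\<in>{1..<Suc (Suc c)}. f k) = f 1 + (\<Sum>k\<in>{1..<Suc c}. f (Suc k))"
    by (simp add: sum.atLeast_Suc_lessThan sum.shift_bounds_Suc_ivl del: sum.op_ivl_Suc)
  moreover have "(\<Sum>k\<in>{1..<Suc c}. f (Suc k))
      = - (\<Sum>k\<in>{1..<Suc c}. (-1)^k * Q (Suc a+k) * Q (Suc c-k))"
    unfolding f_def by (simp add: sum_negf[symmetric])
  ultimately show ?thesis
    unfolding Pt2_of_def f_def[symmetric] by (simp add: f_def algebra_simps)
qed

(* The second vector of the rank-two form in Pt2_of_diff. *)
definition beta_seq :: "(nat \<Rightarrow> rat) \<Rightarrow> rat \<Rightarrow> nat \<Rightarrow> rat" where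
  "beta_seq u p i = (if i = 0 then 1 else (u (Suc i) - u 2 * u i - p * u (i-1)) / 4)"

lemma wedge_beta_seq_Suc_Suc:
  fixes u w :: "nat \<Rightarrow> rat" and t p :: rat
  assumes w: "\<And>i. i \<ge> 1 \<Longrightarrow> w i = u (Suc i) + p * u (i-1)" and a: "a \<ge> 1"
  shows "t * (u a * w (Suc (Suc c)) + w a * u (Suc (Suc c))) / 2
      - t * (u (Suc a) * w (Suc c) + w (Suc a) * u (Suc c)) / 2
      - 2 * t * wedge u (beta_seq u p) (Suc a) (Suc c)
    = 2 * t * wedge u (beta_seq u p) a (Suc (Suc c))"
proof -
  have ws: "w a = u (Suc a) + p * u (a-1)" "w (Suc a) = u (Suc (Suc a)) + p * u a"
    "w (Suc c) = u (Suc (Suc c)) + p * u c"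
    "w (Suc (Suc c)) = u (Suc (Suc (Suc c))) + p * u (Suc c)"
    using w a by auto
  have \<beta>s: "beta_seq u p a = (u (Suc a) - u 2 * u a - p * u (a-1)) / 4"
    "beta_seq u p (Suc a) = (u (Suc (Suc a)) - u 2 * u (Suc a) - p * u a) / 4"
    "beta_seq u p (Suc c) = (u (Suc (Suc c)) - u 2 * u (Suc c) - p * u c) / 4"
    "beta_seq u p (Suc (Suc c))
      = (u (Suc (Suc (Suc c))) - u 2 * u (Suc (Suc c)) - p * u (Suc c)) / 4"
    using a by (auto simp: beta_seq_def)
  show ?thesis
    unfolding wedge_def ws \<beta>s by (simp add: field_simps)
qed

lemma Pt2_of_diff:
  fixes Q Q' u w :: "nat \<Rightarrow> rat" and t p :: rat
  assumes Q: "\<And>i. Q i = (w i + t * u i) / 2" and Q': "\<And>i. Q' i = (w i - t * u i) / 2"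
    and u: "u 0 = 0" "u 1 = 1" and w0: "w 0 = 2"
    and w: "\<And>i. i \<ge> 1 \<Longrightarrow> w i = u (Suc i) + p * u (i-1)"
    and a: "a \<ge> 1"
  shows "Pt2_of Q a b - Pt2_of Q' a b = 2 * t * wedge u (beta_seq u p) a b"
  using a
proof (induction b arbitrary: a rule: nat_less_induct)
  case (1 b a)
  have QQ: "Q i * Q j - Q' i * Q' j = t * (u i * w j + w i * u j) / 2" for i j
    unfolding Q Q' by (simp add: field_simps)
  have \<beta>: "beta_seq u p i = (u (Suc i) - u 2 * u i - p * u (i-1)) / 4" if "i \<ge> 1" for i
    using that by (simp add: beta_seq_def)
  consider "b = 0" | "b = 1" | c where "b = Suc (Suc c)"
    by (metis One_nat_def not0_implies_Suc)
  then show ?case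
  proof cases
    case 1
    then show ?thesis using u w0
      by (simp add: Pt2_of_def Q Q' beta_seq_def wedge_def algebra_simps)
  next
    case 2
    have "w 1 = u 2" using w[of 1] u by (simp add: numeral_2_eq_2)
    then show ?thesis
      using 2 "1.prems" QQ[of a 1] w[of a] u \<beta>[of a]
      by (simp add: Pt2_of_def Q Q' beta_seq_def wedge_def field_simps numeral_2_eq_2)
  next
    case 3
    have IH: "Pt2_of Q (Suc a) (Suc c) - Pt2_of Q' (Suc a) (Suc c)
        = 2 * t * wedge u (beta_seq u p) (Suc a) (Suc c)"
      using "1.IH" 3 by simp
    have "Pt2_of Q a b - Pt2_of Q' a b = (Q a * Q b - Q' a * Q' b)
        - (Q (Suc a) * Q (Suc c) - Q' (Suc a) * Q' (Suc c))
        - (Pt2_of Q (Suc a) (Suc c) - Pt2_of Q' (Suc a) (Suc c))"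
      unfolding 3 using Pt2_of_Suc_Suc[of Q a c] Pt2_of_Suc_Suc[of Q' a c] by linarith
    then show ?thesis
      unfolding QQ IH 3 using wedge_beta_seq_Suc_Suc[OF w "1.prems"] by simp
  qed
qed

definition esym_on :: "nat set \<Rightarrow> nat \<Rightarrow> (nat \<Rightarrow> rat) \<Rightarrow> rat" where
  "esym_on A i y = (\<Sum>S\<in>{S. S \<subseteq> A \<and> card S = i}. \<Prod>k\<in>S. y k)"

lemma esym_on_0: "finite A \<Longrightarrow> esym_on A 0 y = 1"
proof -
  assume "finite A"
  then have "{S. S \<subseteq> A \<and> card S = 0} = {{}}"
    by (auto dest: finite_subset)
  then show ?thesis unfolding esym_on_def by simp
qed

lemma esym_on_insert:
  assumes A: "finite A" "c \<notin> A"
  shows "esym_on (insert c A) (Suc i) y = esym_on A (Suc i) y + y c * esym_on A i y"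
proof -
  let ?S = "\<lambda>i. {S. S \<subseteq> A \<and> card S = i}"
  have "S \<in> insert c ` ?S i" if "S \<subseteq> insert c A" "card S = Suc i" "c \<in> S" for S
    using that A by (intro image_eqI[of _ _ "S - {c}"])
      (auto simp: card_Diff_singleton_if dest: finite_subset)
  moreover have "card (insert c S) = Suc (card S)" if "S \<subseteq> A" for S
    using that A finite_subset by (subst card_insert_disjoint) auto
  ultimately have split: "{S. S \<subseteq> insert c A \<and> card S = Suc i} = ?S (Suc i) \<union> insert c ` ?S i"
    using A by (auto simp: subset_insert)
  have inj: "inj_on (insert c) (?S i)"
  proof (rule inj_onI)
    fix S T assume "S \<in> ?S i" "T \<in> ?S i" "insert c S = insert c T"
    then show "S = T" using A(2) insert_ident[of c S T] by blast
  qed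
  have "esym_on (insert c A) (Suc i) y
      = esym_on A (Suc i) y + (\<Sum>S\<in>insert c ` ?S i. \<Prod>k\<in>S. y k)"
    unfolding esym_on_def split using A by (intro sum.union_disjoint) auto
  also have "(\<Sum>S\<in>insert c ` ?S i. \<Prod>k\<in>S. y k) = (\<Sum>S\<in>?S i. y c * (\<Prod>k\<in>S. y k))"
  proof -
    have "(\<Prod>k\<in>insert c S. y k) = y c * (\<Prod>k\<in>S. y k)" if "S \<subseteq> A" for S
      using that A finite_subset[OF that A(1)] by (subst prod.insert) auto
    then show ?thesis unfolding sum.reindex[OF inj] by (intro sum.cong refl) auto
  qed
  finally show ?thesis by (simp add: esym_on_def sum_distrib_left)
qed

(* e_i(x) = e'_i + t e'_(i-1) + p e'_(i-2), where e' are the elementary symmetric polynomials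
   of x_3, ..., x_n, t = x_1 + x_2 and p = x_1 x_2; hence 2 Ptilde_i = w_i + t u_i with
   u_i = e'_(i-1) and w_i = u_(i+1) + p u_(i-1). *)
definition u_seq :: "nat \<Rightarrow> (nat \<Rightarrow> rat) \<Rightarrow> nat \<Rightarrow> rat" where
  "u_seq n y i = (if i = 0 then 0 else esym_on {3..n} (i-1) y)"

definition w_seq :: "nat \<Rightarrow> (nat \<Rightarrow> rat) \<Rightarrow> nat \<Rightarrow> rat" where
  "w_seq n y i = (if i = 0 then 2 else u_seq n y (Suc i) + y 1 * y 2 * u_seq n y (i-1))"

lemma esym_split_first_two:
  assumes "n \<ge> 2"
  shows "esym n (Suc i) y = esym_on {3..n} (Suc i) y + (y 1 + y 2) * u_seq n y (Suc i)
    + y 1 * y 2 * u_seq n y i"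
proof -
  have "{1..n} = insert 1 (insert 2 {3..n})" using assms by auto
  then have "esym n (Suc i) y = esym_on (insert 1 (insert 2 {3..n})) (Suc i) y"
    unfolding esym_def esym_on_def by simp
  then show ?thesis
    by (cases i) (simp_all add: esym_on_insert esym_on_0 u_seq_def algebra_simps)
qed

lemma Pt1_eq_seqs: "n \<ge> 2 \<Longrightarrow> Pt1 n i y = (w_seq n y i + (y 1 + y 2) * u_seq n y i) / 2"
  by (cases i) (simp_all add: Pt1_def w_seq_def esym_split_first_two u_seq_def algebra_simps)

lemma sbox_apply: "sbox x 1 = - x 2" "sbox x 2 = - x 1"
  by (simp_all add: sbox_def)

lemma u_seq_sbox: "u_seq n (sbox x) = u_seq n x"
  unfolding u_seq_def esym_on_def
  by (intro ext if_cong refl sum.cong prod.cong) (auto simp: sbox_def)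

lemma w_seq_sbox: "w_seq n (sbox x) = w_seq n x"
  unfolding w_seq_def u_seq_sbox sbox_apply by (intro ext) (simp add: algebra_simps)

lemma Pt2_sbox_diff:
  assumes "n \<ge> 2" "a \<ge> 1"
  shows "Pt2 n a b x - Pt2 n a b (sbox x)
    = 2 * (x 1 + x 2) * wedge (u_seq n x) (beta_seq (u_seq n x) (x 1 * x 2)) a b"
proof -
  have "Pt1 n i (sbox x) = (w_seq n x i - (x 1 + x 2) * u_seq n x i) / 2" for i
    using Pt1_eq_seqs[OF assms(1), of i "sbox x"] unfolding u_seq_sbox w_seq_sbox sbox_apply
    by (simp add: algebra_simps)
  moreover have "u_seq n x 0 = 0" "u_seq n x 1 = 1" "w_seq n x 0 = 2"
    by (simp_all add: u_seq_def w_seq_def esym_on_0)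
  moreover have "w_seq n x i = u_seq n x (Suc i) + x 1 * x 2 * u_seq n x (i-1)" if "i \<ge> 1" for i
    using that by (simp add: w_seq_def)
  ultimately show ?thesis
    unfolding Pt2_eq_Pt2_of by (rule Pt2_of_diff[OF Pt1_eq_seqs[OF assms(1)] _ _ _ _ _ assms(2)])
qed

section \<open>Removing two parts of a partition\<close>

lemma filter_notin_eq_take_drop:
  assumes "distinct xs" "j < length xs" "set xs \<inter> S = {xs ! j}"
  shows "filter (\<lambda>p. p \<notin> S) xs = take j xs @ drop (Suc j) xs"
proof -
  have xs: "take j xs @ xs ! j # drop (Suc j) xs = xs"
    using assms(2) by (simp flip: id_take_nth_drop)
  then have "xs ! j \<notin> set (take j xs)" "xs ! j \<notin> set (drop (Suc j) xs)"
    using assms(1) distinct_append[of "take j xs" "xs ! j # drop (Suc j) xs"] by auto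
  moreover have "p \<notin> S" if "p \<in> set xs" "p \<noteq> xs ! j" for p
    using that assms(3) by blast
  ultimately have "\<forall>p\<in>set (take j xs). p \<notin> S" "\<forall>p\<in>set (drop (Suc j) xs). p \<notin> S"
    by (metis in_set_takeD, metis in_set_dropD)
  moreover have "xs ! j \<in> S" using assms(3) by blast
  ultimately have "filter (\<lambda>p. p \<notin> S) (take j xs @ xs ! j # drop (Suc j) xs)
      = take j xs @ drop (Suc j) xs"
    by simp
  then show ?thesis unfolding xs .
qed

lemma nth_take_drop_Suc:
  "u < length xs - 1 \<Longrightarrow> j < length xs \<Longrightarrow> (take j xs @ drop (Suc j) xs) ! u = xs ! skip j u"
  by (auto simp: nth_append skip_def min_def)

lemma part_ge_1: "strict_partition_le n lam \<Longrightarrow> u < length lam \<Longrightarrow> 1 \<le> part lam (Suc u)"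
  by (auto simp: strict_partition_le_def part_def)

lemma remove_parts_last_pair:
  assumes lam: "strict_partition_le n lam" and len: "(length lam + 1) div 2 = Suc k"
    and j: "j < 2*k+1"
  defines "rest \<equiv> remove_parts lam {part lam (Suc j), part lam (2 * Suc k)}"
  shows "length rest = 2*k" "\<And>u. u < 2*k \<Longrightarrow> part rest (Suc u) = part lam (Suc (skip j u))"
proof -
  let ?S = "{part lam (Suc j), part lam (2 * Suc k)}" and ?L = "take (2*k+1) lam"
  have "sorted_wrt (<) (rev lam)" and pos: "0 \<notin> set lam"
    using lam unfolding strict_partition_le_def by (auto simp: sorted_wrt_rev)
  then have dist: "distinct lam"
    by (simp add: strict_sorted_iff)
  have ll: "length lam = 2*k+1 \<or> length lam = 2*k+2"
    using len by linarith
  have L: "length ?L = 2*k+1" "?L ! j = part lam (Suc j)"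
    using ll j by (auto simp: part_def)
  \<comment> \<open>For odd length, part lam (2 * Suc k) is the padding 0, which is not a part.\<close>
  have drop: "drop (2*k+1) lam = (if length lam = 2*k+1 then [] else [part lam (2 * Suc k)])"
    using ll Cons_nth_drop_Suc[of "2*k+1" lam] by (auto simp: part_def)
  have "part lam (2 * Suc k) \<notin> set ?L"
    using ll pos set_take_disj_set_drop_if_distinct[OF dist, of "2*k+1" "2*k+1"] drop
    by (auto simp: part_def dest: in_set_takeD split: if_splits)
  moreover have "?L ! j \<in> set ?L"
    using L j by (metis nth_mem)
  ultimately have "set ?L \<inter> ?S = {?L ! j}"
    using L by auto
  then have "filter (\<lambda>p. p \<notin> ?S) ?L = take j ?L @ drop (Suc j) ?L"
    using dist L j by (intro filter_notin_eq_take_drop) auto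
  moreover have "filter (\<lambda>p. p \<notin> ?S) (drop (2*k+1) lam) = []"
    using drop by simp
  ultimately have rest: "rest = take j ?L @ drop (Suc j) ?L"
    unfolding rest_def remove_parts_def
    by (subst append_take_drop_id[symmetric, of _ "2*k+1"], subst filter_append) simp
  then show "length rest = 2*k"
    using L j by simp
  show "part rest (Suc u) = part lam (Suc (skip j u))" if "u < 2*k" for u
    using that rest L j nth_take_drop_Suc[of u ?L j] ll
    by (auto simp: part_def skip_def)
qed

lemma PtP_remove_parts_last_pair:
  assumes "strict_partition_le n lam" "(length lam + 1) div 2 = Suc k" "j < 2*k+1"
  shows "PtP n (remove_parts lam {part lam (Suc j), part lam (2 * Suc k)}) y
    = pfaffian k (\<lambda>u v. Pt2 n (part lam (Suc (skip j u))) (part lam (Suc (skip j v))) y)"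
proof -
  have k: "(2*k + 1) div 2 = k" by simp
  show ?thesis
    unfolding PtP_def remove_parts_last_pair(1)[OF assms] k
    using remove_parts_last_pair(2)[OF assms] by (intro pfaffian_cong) simp
qed

lemma sum_parts_eq_sum_skip:
  assumes lam: "strict_partition_le n lam" and k: "(length lam + 1) div 2 = Suc k"
  shows "(let r = 2 * ((length lam + 1) div 2) in
     (\<Sum>j\<in>{1..<r}. (-1)^(j-1) * dbox (Pt2 n (part lam j) (part lam r)) x
        * dbox (PtP n (remove_parts lam {part lam j, part lam r})) x))
    = (\<Sum>j<2*k+1. (-1)^j * dbox (\<lambda>y. Pt2 n (part lam (Suc j)) (part lam (Suc (2*k+1))) y) x
        * dbox (\<lambda>y. pfaffian k (\<lambda>u v. Pt2 n (part lam (Suc (skip j u))) (part lam (Suc (skip j v))) y)) x)"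
proof -
  have r: "2 * ((length lam + 1) div 2) = Suc (2*k+1)"
    using k by simp
  have "PtP n (remove_parts lam {part lam (Suc j), part lam (Suc (2*k+1))})
      = (\<lambda>y. pfaffian k (\<lambda>u v. Pt2 n (part lam (Suc (skip j u))) (part lam (Suc (skip j v))) y))"
    if "j < 2*k+1" for j
    using PtP_remove_parts_last_pair[OF lam k that] by auto
  then show ?thesis
    unfolding Let_def r unfolding One_nat_def sum.shift_bounds_Suc_ivl atLeast0LessThan
    by (intro sum.cong) simp_all
qed

theorem theorem2:
  fixes n :: nat and lam :: "nat list" and x :: "nat \<Rightarrow> rat"
  assumes "n \<ge> 3" and "strict_partition_le n lam" and "length lam \<ge> 3"
    and "x 1 + x 2 \<noteq> 0"
  shows "(let r = 2 * ((length lam + 1) div 2) in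
     (\<Sum>j\<in>{1..<r}. (-1)^(j-1)
        * dbox (Pt2 n (part lam j) (part lam r)) x
        * dbox (PtP n (remove_parts lam {part lam j, part lam r})) x)) = 0"
proof -
  obtain k where k: "(length lam + 1) div 2 = Suc k"
    using assms(3) not0_implies_Suc by fastforce
  define A where "A y u v = Pt2 n (part lam (Suc u)) (part lam (Suc v)) y" for y u v
  let ?u = "u_seq n x" and ?\<beta> = "beta_seq (u_seq n x) (x 1 * x 2)"
  have "A x u v - A (sbox x) u v
      = 2 * (x 1 + x 2) * wedge (\<lambda>i. ?u (part lam (Suc i))) (\<lambda>i. ?\<beta> (part lam (Suc i))) u v"
    if "u < v" "v \<le> 2*k+1" for u v
    using Pt2_sbox_diff[of n "part lam (Suc u)"] part_ge_1[OF assms(2), of u] assms(1) that k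
    unfolding A_def wedge_def by simp
  then have "(\<Sum>j<2*k+1. (-1)^j * dbox (\<lambda>y. A y j (2*k+1)) x
      * dbox (\<lambda>y. pfaffian k (\<lambda>u v. A y (skip j u) (skip j v))) x) = 0"
    using assms(4) by (rule dbox_pfaffian_cross_sum[rotated])
  then show ?thesis
    unfolding sum_parts_eq_sum_skip[OF assms(2) k] A_def .
qed

end
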